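(* Let $\varepsilon>0$, let $c=(1+\varepsilon)n$, let $D$ be a positive integer and let $\frac{\log n}{n}\le p\le\frac{2\log n}{n}$. Then with probability $1-o(1)$ the graph $G\sim\mathcal G_c(n,p)$ has the following property: for every $j\le\frac{n}{\log^{0.9}n}$ and every collection of $j$ vertex-disjoint stars in $G$, each with $\log^{0.2}n$ edges, the number of distinct colors appearing on their edges is at least $2Dj$.
   Context: $\mathcal G_c(n,p)$: random graph on $[n]$, each pair an edge independently with probability $p$, each edge colored uniformly and independently from $[c]$. Asymptotics as $n\to\infty$. *)

theory Defs
  imports "HOL-Probability.Probability"
begin

text \<open>Random edge-coloured graph G_c(n,p) on vertex set {0..<n}.
  An outcome is a map from unordered pairs (u,v), u<v<n, to
  None (no edge) or Some k (edge with colour k in {0..<c}).\<close>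

definition edge_pmf :: "real \<Rightarrow> nat \<Rightarrow> nat option pmf" where
  "edge_pmf p c = bind_pmf (bernoulli_pmf p)
     (\<lambda>b. if b then map_pmf Some (pmf_of_set {..<c}) else return_pmf None)"

definition vpairs :: "nat \<Rightarrow> (nat \<times> nat) set" where
  "vpairs n = {(u, v). u < v \<and> v < n}"

definition Gc :: "nat \<Rightarrow> real \<Rightarrow> nat \<Rightarrow> (nat \<times> nat \<Rightarrow> nat option) pmf" where
  "Gc n p c = Pi_pmf (vpairs n) None (\<lambda>_. edge_pmf p c)"

definition ecol :: "(nat \<times> nat \<Rightarrow> nat option) \<Rightarrow> nat \<Rightarrow> nat \<Rightarrow> nat option" where
  "ecol \<omega> u v = \<omega> (min u v, max u v)"

definition star_family ::
  "(nat \<times> nat \<Rightarrow> nat option) \<Rightarrow> nat \<Rightarrow> nat \<Rightarrow> nat \<Rightarrow> (nat \<Rightarrow> nat) \<Rightarrow> (nat \<Rightarrow> nat set) \<Rightarrow> bool" where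
  "star_family \<omega> n s j cen L \<longleftrightarrow>
     (\<forall>i<j. cen i < n \<and> L i \<subseteq> {..<n} \<and> cen i \<notin> L i \<and> card (L i) = s \<and>
            (\<forall>y\<in>L i. ecol \<omega> (cen i) y \<noteq> None)) \<and>
     (\<forall>i<j. \<forall>k<j. i \<noteq> k \<longrightarrow> insert (cen i) (L i) \<inter> insert (cen k) (L k) = {})"

definition star_colors ::
  "(nat \<times> nat \<Rightarrow> nat option) \<Rightarrow> nat \<Rightarrow> (nat \<Rightarrow> nat) \<Rightarrow> (nat \<Rightarrow> nat set) \<Rightarrow> nat set" where
  "star_colors \<omega> j cen L = {k. \<exists>i<j. \<exists>y\<in>L i. ecol \<omega> (cen i) y = Some k}"

definition star_prop :: "nat \<Rightarrow> nat \<Rightarrow> (nat \<times> nat \<Rightarrow> nat option) \<Rightarrow> bool" where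
  "star_prop n D \<omega> \<longleftrightarrow>
     (\<forall>j cen L. real j \<le> real n / (ln (real n) powr 0.9) \<and>
        star_family \<omega> n (nat \<lfloor>ln (real n) powr 0.2\<rfloor>) j cen L \<longrightarrow>
        2 * D * j \<le> card (star_colors \<omega> j cen L))"

end

theory Submission
  imports Defs "HOL-Real_Asymp.Real_Asymp"
begin

text \<open>First moment method. Let \<open>L = ln n\<close> and \<open>s = \<lfloor>L^0.2\<rfloor>\<close>. If \<open>j\<close> disjoint stars with
  \<open>s\<close> edges each see fewer than \<open>2Dj\<close> colours, then for \<open>m = 2Dj - 1\<close> there are a set \<open>T\<close> of
  \<open>m\<close> colours and a system of \<open>j\<close> pairs (centre, \<open>s\<close>-set of leaves) whose \<open>sj\<close> edges are
  distinct, present and coloured from \<open>T\<close>; this has probability \<open>(pm/c)^(sj)\<close>. There are at most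
  \<open>C(c,m)\<close> colour sets and \<open>C(n C(n,s), j)\<close> systems, and with \<open>C(a,b) \<le> (ea/b)^b\<close> the \<open>j\<close>-th
  term of the union bound is at most \<open>r^j\<close>: for each leaf, the \<open>enp/s \<le> 2eL/s\<close> choices are
  outweighed by the chance \<open>m/c \<le> 2D L^-0.9\<close> that its edge is coloured from \<open>T\<close>, so that
  \<open>r = O(L^(0.9(2D+1)) (L^-0.05)^(s-1)) \<rightarrow> 0\<close>. The failure probability is at most \<open>2r\<close>.\<close>

subsection \<open>Edge probabilities\<close>

lemma pmf_edge_pmf_Some:
  assumes "0 \<le> p" "p \<le> 1" "c > 0"
  shows "pmf (edge_pmf p c) (Some k) = (if k < c then p / c else 0)"
  unfolding edge_pmf_def using assms
  by (simp add: pmf_bind pmf_map_inj' inj_on_def lessThan_empty_iff)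

lemma prob_edge_pmf_colour_in:
  assumes "0 \<le> p" "p \<le> 1" "c > 0" "T \<subseteq> {..<c}"
  shows "measure_pmf.prob (edge_pmf p c) (Some ` T) = p * card T / c"
proof -
  have "finite T" using assms(4) finite_subset by blast
  then have "measure_pmf.prob (edge_pmf p c) (Some ` T) = (\<Sum>k\<in>T. pmf (edge_pmf p c) (Some k))"
    by (simp add: measure_measure_pmf_finite sum.reindex)
  also have "\<dots> = (\<Sum>k\<in>T. p / c)"
    using assms by (intro sum.cong) (auto simp: pmf_edge_pmf_Some)
  finally show ?thesis by simp
qed

lemma finite_vpairs: "finite (vpairs n)"
  by (rule finite_subset[of _ "{..<n} \<times> {..<n}"]) (auto simp: vpairs_def)

lemma prob_Gc_colours_in:
  assumes "0 \<le> p" "p \<le> 1" "c > 0" "T \<subseteq> {..<c}" "E \<subseteq> vpairs n"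
  shows "measure_pmf.prob (Gc n p c) {\<omega>. \<forall>e\<in>E. \<omega> e \<in> Some ` T} = (p * card T / c) ^ card E"
proof -
  have "{\<omega>. \<forall>e\<in>E. \<omega> e \<in> Some ` T} = Pi (vpairs n) (\<lambda>e. if e \<in> E then Some ` T else UNIV)"
    using assms(5) by (auto simp: Pi_def)
  then have "measure_pmf.prob (Gc n p c) {\<omega>. \<forall>e\<in>E. \<omega> e \<in> Some ` T}
      = (\<Prod>e\<in>vpairs n. measure_pmf.prob (edge_pmf p c) (if e \<in> E then Some ` T else UNIV))"
    unfolding Gc_def by (simp add: measure_Pi_pmf_Pi[OF finite_vpairs])
  also have "\<dots> = (\<Prod>e\<in>vpairs n. if e \<in> E then p * card T / c else 1)"
    using assms by (intro prod.cong) (auto simp: prob_edge_pmf_colour_in)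
  also have "\<dots> = (p * card T / c) ^ card E"
    using assms(5) finite_subset[OF assms(5) finite_vpairs]
    by (simp add: prod.If_cases finite_vpairs Int_absorb1 Int_def[symmetric])
  finally show ?thesis .
qed

lemma Gc_colour_less:
  assumes "0 \<le> p" "p \<le> 1" "c > 0" "\<omega> \<in> set_pmf (Gc n p c)" "\<omega> e = Some k"
  shows "k < c"
proof (rule ccontr)
  assume "\<not> k < c"
  then have not_Some: "Some k \<notin> set_pmf (edge_pmf p c)"
    using assms by (simp add: set_pmf_iff pmf_edge_pmf_Some)
  have "\<omega> \<in> PiE_dflt (vpairs n) None (\<lambda>_. set_pmf (edge_pmf p c))"
    using assms(4) unfolding Gc_def set_Pi_pmf[OF finite_vpairs] by (simp add: comp_def)
  then have "\<omega> e \<in> set_pmf (edge_pmf p c) \<or> \<omega> e = None"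
    unfolding PiE_dflt_def by (cases e, cases "e \<in> vpairs n") auto
  then show False using not_Some assms(5) by simp
qed

subsection \<open>Star systems\<close>

text \<open>A star is encoded as the pair of its centre and its leaf set. Requiring the \<open>s * j\<close> edges
  of a system to be distinct makes their colour events independent.\<close>

definition star_edges :: "(nat \<times> nat set) set \<Rightarrow> (nat \<times> nat) set" where
  "star_edges S = (\<Union>(a, B)\<in>S. (\<lambda>y. (min a y, max a y)) ` B)"

definition star_systems :: "nat \<Rightarrow> nat \<Rightarrow> nat \<Rightarrow> (nat \<times> nat set) set set" where
  "star_systems n s j = {S. S \<subseteq> {..<n} \<times> {B. B \<subseteq> {..<n} \<and> card B = s} \<and> card S = j \<and>
     card (star_edges S) = s * j \<and> star_edges S \<subseteq> vpairs n}"

lemma finite_star_systems: "finite (star_systems n s j)"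
  by (rule finite_subset[of _ "Pow ({..<n} \<times> Pow {..<n})"]) (auto simp: star_systems_def)

lemma card_star_systems_le: "card (star_systems n s j) \<le> (n * (n choose s)) choose j"
proof -
  let ?X = "{..<n} \<times> {B. B \<subseteq> {..<n} \<and> card B = s}"
  have "card (star_systems n s j) \<le> card {S. S \<subseteq> ?X \<and> card S = j}"
    by (rule card_mono) (auto simp: star_systems_def)
  also have "\<dots> = card ?X choose j" by (rule n_subsets) simp
  also have "card ?X = n * (n choose s)" by (simp add: card_cartesian_product n_subsets)
  finally show ?thesis .
qed

lemma star_edges_image:
  "star_edges ((\<lambda>i. (a i, B i)) ` I) = (\<lambda>(i, y). (min (a i) y, max (a i) y)) ` (SIGMA i:I. B i)"
  unfolding star_edges_def by auto

lemma star_family_centres_inj: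
  assumes "star_family \<omega> n s j cen L"
  shows "inj_on cen {..<j}"
  using assms unfolding star_family_def inj_on_def by blast

lemma star_family_length_le:
  assumes "star_family \<omega> n s j cen L"
  shows "j \<le> n"
proof -
  have "cen ` {..<j} \<subseteq> {..<n}" using assms by (auto simp: star_family_def)
  then have "card (cen ` {..<j}) \<le> n" by (metis card_lessThan card_mono finite_lessThan)
  then show ?thesis by (simp add: card_image[OF star_family_centres_inj[OF assms]])
qed

lemma star_family_edges_inj:
  assumes "star_family \<omega> n s j cen L"
  shows "inj_on (\<lambda>(i, y). (min (cen i) y, max (cen i) y)) (SIGMA i:{..<j}. L i)"
proof (rule inj_onI, clarsimp)
  fix i y k z
  assume i: "i < j" "y \<in> L i" and k: "k < j" "z \<in> L k"
    and eq: "min (cen i) y = min (cen k) z" "max (cen i) y = max (cen k) z"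
  have "cen i \<noteq> y" using assms i by (auto simp: star_family_def)
  have pair: "{cen i, y} = {cen k, z}" using eq by (auto simp: min_def max_def split: if_splits)
  show "i = k \<and> y = z"
  proof (cases "i = k")
    case True
    then show ?thesis using pair \<open>cen i \<noteq> y\<close> by (auto simp: doubleton_eq_iff)
  next
    case False
    then have "insert (cen i) (L i) \<inter> insert (cen k) (L k) = {}"
      using assms i k by (auto simp: star_family_def)
    moreover have "cen i \<in> insert (cen k) (L k)" using pair k by (auto simp: doubleton_eq_iff)
    ultimately show ?thesis by blast
  qed
qed

lemma star_family_in_star_systems:
  assumes fam: "star_family \<omega> n s j cen L"
  shows "(\<lambda>i. (cen i, L i)) ` {..<j} \<in> star_systems n s j"
proof -
  have star: "cen i < n" "L i \<subseteq> {..<n}" "cen i \<notin> L i" "card (L i) = s" if "i < j" for i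
    using fam that by (auto simp: star_family_def)
  have "inj_on (\<lambda>i. (cen i, L i)) {..<j}"
    using star_family_centres_inj[OF fam] by (auto simp: inj_on_def)
  then have card_S: "card ((\<lambda>i. (cen i, L i)) ` {..<j}) = j" by (simp add: card_image)
  have "finite (L i)" if "i < j" for i using star(2)[OF that] finite_subset by blast
  then have "card (SIGMA i:{..<j}. L i) = (\<Sum>i<j. card (L i))" by (simp add: card_SigmaI)
  also have "\<dots> = s * j" using star by simp
  finally have card_E: "card (star_edges ((\<lambda>i. (cen i, L i)) ` {..<j})) = s * j"
    unfolding star_edges_image by (simp add: card_image[OF star_family_edges_inj[OF fam]])
  have "(min (cen i) y, max (cen i) y) \<in> vpairs n" if "i < j" "y \<in> L i" for i y
  proof -
    have "cen i \<noteq> y" "cen i < n" "y < n" using star[OF that(1)] that(2) by auto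
    then show ?thesis unfolding vpairs_def by (cases "cen i < y") (simp_all add: min_def max_def)
  qed
  then have "star_edges ((\<lambda>i. (cen i, L i)) ` {..<j}) \<subseteq> vpairs n"
    unfolding star_edges_image by (auto simp: image_subset_iff)
  moreover have "(\<lambda>i. (cen i, L i)) ` {..<j} \<subseteq> {..<n} \<times> {B. B \<subseteq> {..<n} \<and> card B = s}"
    using star by auto
  ultimately show ?thesis using card_S card_E unfolding star_systems_def by (intro CollectI conjI)
qed

lemma star_family_edges_coloured:
  assumes "star_family \<omega> n s j cen L" "e \<in> star_edges ((\<lambda>i. (cen i, L i)) ` {..<j})"
  shows "\<omega> e \<in> Some ` star_colors \<omega> j cen L"
proof -
  obtain i y where iy: "i < j" "y \<in> L i" "e = (min (cen i) y, max (cen i) y)"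
    using assms(2) unfolding star_edges_image by auto
  have "ecol \<omega> (cen i) y \<noteq> None" using assms(1) iy(1,2) unfolding star_family_def by blast
  then obtain k where k: "ecol \<omega> (cen i) y = Some k" by blast
  then have "k \<in> star_colors \<omega> j cen L" using iy(1,2) unfolding star_colors_def by blast
  moreover have "\<omega> e = Some k" using k iy(3) by (simp add: ecol_def)
  ultimately show ?thesis by blast
qed

lemma not_star_prop_imp_coloured_star_system:
  fixes n D c :: nat
  defines "s \<equiv> nat \<lfloor>ln (real n) powr 0.2\<rfloor>" and "B \<equiv> real n / ln (real n) powr 0.9"
  assumes "\<not> star_prop n D \<omega>" and colours_of: "\<And>e k. \<omega> e = Some k \<Longrightarrow> k < c"
    and few_colours: "\<And>j. real j \<le> B \<Longrightarrow> 2 * D * j \<le> c"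
  obtains j T S where "1 \<le> j" "j \<le> n" "real j \<le> B" "T \<subseteq> {..<c}" "card T = 2 * D * j - 1"
    "S \<in> star_systems n s j" "\<forall>e\<in>star_edges S. \<omega> e \<in> Some ` T"
proof -
  obtain j cen L where j: "real j \<le> B" and fam: "star_family \<omega> n s j cen L"
    and fewer: "card (star_colors \<omega> j cen L) < 2 * D * j"
    using assms(3) unfolding star_prop_def s_def B_def by auto
  have "1 \<le> j" using fewer by (cases j) auto
  have "star_colors \<omega> j cen L \<subseteq> {..<c}"
    using colours_of by (auto simp: star_colors_def ecol_def)
  moreover have "card (star_colors \<omega> j cen L) \<le> 2 * D * j - 1" "2 * D * j - 1 \<le> card {..<c}"
    using fewer few_colours[OF j] by auto
  ultimately obtain T where T: "star_colors \<omega> j cen L \<subseteq> T" "T \<subseteq> {..<c}" "card T = 2 * D * j - 1"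
    using exists_subset_between[of "star_colors \<omega> j cen L" "2 * D * j - 1" "{..<c}"] by auto
  have "\<forall>e\<in>star_edges ((\<lambda>i. (cen i, L i)) ` {..<j}). \<omega> e \<in> Some ` T"
    using star_family_edges_coloured[OF fam] T(1) by blast
  then show thesis
    using that[OF \<open>1 \<le> j\<close> star_family_length_le[OF fam] j T(2,3) star_family_in_star_systems[OF fam]]
    by blast
qed

lemma prob_not_star_prop_le_sum:
  fixes n D c :: nat and p :: real
  defines "s \<equiv> nat \<lfloor>ln (real n) powr 0.2\<rfloor>" and "B \<equiv> real n / ln (real n) powr 0.9"
  assumes p: "0 \<le> p" "p \<le> 1" and "c > 0"
    and few_colours: "\<And>j. real j \<le> B \<Longrightarrow> 2 * D * j \<le> c"
  shows "measure_pmf.prob (Gc n p c) {\<omega>. \<not> star_prop n D \<omega>}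
     \<le> (\<Sum>j | 1 \<le> j \<and> j \<le> n \<and> real j \<le> B.
          real (c choose (2*D*j - 1)) * real ((n * (n choose s)) choose j) * (p * real (2*D*j - 1) / c) ^ (s*j))"
proof -
  define M where "M = Gc n p c"
  define J where "J = {j. 1 \<le> j \<and> j \<le> n \<and> real j \<le> B}"
  define Ts where "Ts j = {T. T \<subseteq> {..<c} \<and> card T = 2 * D * j - 1}" for j
  define A where "A S T = {\<omega> :: nat \<times> nat \<Rightarrow> nat option. \<forall>e\<in>star_edges S. \<omega> e \<in> Some ` T}"
    for S T
  have "finite J" unfolding J_def by (rule finite_subset[of _ "{..n}"]) auto
  have "finite (Ts j)" for j unfolding Ts_def by (rule finite_subset[of _ "Pow {..<c}"]) auto
  have card_Ts: "card (Ts j) = c choose (2 * D * j - 1)" for j by (simp add: Ts_def n_subsets)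
  have card_le: "real (card (star_systems n s j)) \<le> real ((n * (n choose s)) choose j)" for j
    by (simp only: of_nat_le_iff card_star_systems_le)
  have cover: "{\<omega>. \<not> star_prop n D \<omega>} \<inter> set_pmf M \<subseteq> (\<Union>j\<in>J. \<Union>T\<in>Ts j. \<Union>S\<in>star_systems n s j. A S T)"
  proof clarify
    fix \<omega> assume "\<not> star_prop n D \<omega>" "\<omega> \<in> set_pmf M"
    moreover have "\<And>e k. \<omega> e = Some k \<Longrightarrow> k < c"
      using Gc_colour_less[OF p \<open>c > 0\<close>] \<open>\<omega> \<in> set_pmf M\<close> unfolding M_def by blast
    ultimately obtain j T S where "1 \<le> j" "j \<le> n" "real j \<le> B" "T \<subseteq> {..<c}" "card T = 2 * D * j - 1"
        "S \<in> star_systems n s j" "\<forall>e\<in>star_edges S. \<omega> e \<in> Some ` T"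
      using not_star_prop_imp_coloured_star_system[of n D \<omega> c] few_colours
      unfolding s_def B_def by blast
    then show "\<omega> \<in> (\<Union>j\<in>J. \<Union>T\<in>Ts j. \<Union>S\<in>star_systems n s j. A S T)"
      unfolding J_def Ts_def A_def by blast
  qed
  have prob_A: "measure_pmf.prob M (A S T) = (p * real (2*D*j - 1) / c) ^ (s*j)"
    if "T \<in> Ts j" "S \<in> star_systems n s j" for j S T
    using prob_Gc_colours_in[OF p \<open>c > 0\<close>, of T "star_edges S" n] that
    by (simp add: M_def A_def Ts_def star_systems_def)
  have "measure_pmf.prob M {\<omega>. \<not> star_prop n D \<omega>} = measure_pmf.prob M ({\<omega>. \<not> star_prop n D \<omega>} \<inter> set_pmf M)"
    by (simp add: measure_Int_set_pmf)
  also have "\<dots> \<le> measure_pmf.prob M (\<Union>j\<in>J. \<Union>T\<in>Ts j. \<Union>S\<in>star_systems n s j. A S T)"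
    by (rule measure_pmf.finite_measure_mono[OF cover]) simp
  also have "\<dots> \<le> (\<Sum>j\<in>J. \<Sum>T\<in>Ts j. \<Sum>S\<in>star_systems n s j. measure_pmf.prob M (A S T))"
    using \<open>finite J\<close> \<open>\<And>j. finite (Ts j)\<close> finite_star_systems
    by (intro order.trans[OF measure_pmf.finite_measure_subadditive_finite] sum_mono) auto
  also have "\<dots> = (\<Sum>j\<in>J. real (c choose (2*D*j - 1)) * real (card (star_systems n s j)) * (p * real (2*D*j - 1) / c) ^ (s*j))"
    by (simp add: prob_A card_Ts mult.assoc cong: sum.cong)
  also have "\<dots> \<le> (\<Sum>j\<in>J. real (c choose (2*D*j - 1)) * real ((n * (n choose s)) choose j) * (p * real (2*D*j - 1) / c) ^ (s*j))"
    using p by (intro sum_mono mult_right_mono mult_left_mono card_le) auto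
  finally show ?thesis unfolding M_def J_def .
qed

subsection \<open>Binomial estimates\<close>

lemma pow_div_fact_le_exp:
  fixes x :: real
  assumes "0 \<le> x"
  shows "x ^ k / fact k \<le> exp x"
proof -
  have "(\<Sum>i\<in>{k}. x ^ i /\<^sub>R fact i) \<le> (\<Sum>i. x ^ i /\<^sub>R fact i)"
    using assms by (intro sum_le_suminf summable_exp_generic) auto
  then show ?thesis by (simp add: exp_def divide_inverse mult.commute)
qed

lemma binomial_le_pow_div_fact: "real (a choose b) \<le> real a ^ b / fact b"
proof -
  have "real ((a choose b) * fact b) \<le> real (a ^ b)"
    by (simp only: of_nat_le_iff binomial_fact_pow)
  then show ?thesis by (simp add: field_simps)
qed

lemma binomial_le_exp_pow: "real (a choose b) \<le> (exp 1 * real a / real b) ^ b"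
proof (cases "b = 0")
  case False
  have "real b ^ b / fact b \<le> exp 1 ^ b"
    using pow_div_fact_le_exp[of "real b" b] by (simp add: exp_of_nat_mult[symmetric])
  then have "(real a / real b) ^ b * (real b ^ b / fact b) \<le> (real a / real b) ^ b * exp 1 ^ b"
    by (rule mult_left_mono) simp
  moreover have "(real a / real b) ^ b * (real b ^ b / fact b) = real a ^ b / fact b"
    using False by (simp add: power_divide)
  moreover have "exp 1 ^ b * (real a / real b) ^ b = (exp 1 * real a / real b) ^ b"
    by (simp add: power_mult_distrib power_divide)
  ultimately show ?thesis
    using binomial_le_pow_div_fact[of a b] by (simp add: mult.commute)
qed simp

lemma binomial_mul_ratio_pow_le:
  assumes "m \<le> k"
  shows "real (c choose m) * (real m / real c) ^ k \<le> exp (real m) * (real m / real c) ^ (k - m)"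
proof -
  have "real (c choose m) * (real m / real c) ^ m \<le> real c ^ m / fact m * (real m / real c) ^ m"
    by (intro mult_right_mono binomial_le_pow_div_fact) simp
  also have "\<dots> = real c ^ m * (real m / real c) ^ m / fact m" by simp
  also have "\<dots> \<le> real m ^ m / fact m"
  proof -
    have "real c ^ m * (real m / real c) ^ m \<le> real m ^ m"
      by (cases "c = 0"; cases m) (simp_all add: power_divide)
    then show ?thesis by (rule divide_right_mono) simp
  qed
  also have "\<dots> \<le> exp (real m)" by (rule pow_div_fact_le_exp) simp
  finally have "real (c choose m) * (real m / real c) ^ m * (real m / real c) ^ (k - m)
      \<le> exp (real m) * (real m / real c) ^ (k - m)"
    by (rule mult_right_mono) simp
  moreover have "(real m / real c) ^ k = (real m / real c) ^ m * (real m / real c) ^ (k - m)"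
    using assms by (metis le_add_diff_inverse power_add)
  ultimately show ?thesis by (simp add: mult.assoc)
qed

subsection \<open>The terms of the union bound\<close>

lemma colour_factor_le:
  fixes n c s j D m :: nat
  assumes n: "1 \<le> n" "n \<le> c" and m: "m \<le> c" "m \<le> 2 * D * j" and s: "2 * D \<le> s"
  shows "real (c choose m) * (real m / real c) ^ (s * j)
    \<le> (exp (real (2*D)) * (2 * real D * (real j / real n)) ^ (s - 2*D)) ^ j"
proof -
  define a where "a = real m / real c"
  have "0 \<le> a" "a \<le> 1" using m n by (auto simp: a_def)
  have a_le: "a \<le> 2 * real D * (real j / real n)"
  proof -
    have "a \<le> real (2 * D * j) / real c"
      unfolding a_def using m(2) by (intro divide_right_mono) (simp_all only: of_nat_le_iff)
    also have "\<dots> \<le> real (2 * D * j) / real n"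
      using n by (intro divide_left_mono) auto
    finally show ?thesis by simp
  qed
  have "2 * D * j \<le> s * j" using s by (rule mult_le_mono1)
  with m(2) have "m \<le> s * j" by (rule le_trans)
  have "(s - 2 * D) * j \<le> s * j - m" using m(2) by (simp add: diff_mult_distrib)
  have "real (c choose m) * a ^ (s * j) \<le> exp (real m) * a ^ (s * j - m)"
    unfolding a_def by (rule binomial_mul_ratio_pow_le) fact
  also have "\<dots> \<le> exp (real (2 * D * j)) * a ^ ((s - 2 * D) * j)"
    using of_nat_mono[OF m(2)] \<open>0 \<le> a\<close> \<open>a \<le> 1\<close> \<open>(s - 2 * D) * j \<le> s * j - m\<close>
    by (intro mult_mono power_decreasing) auto
  also have "\<dots> \<le> exp (real (2 * D * j)) * (2 * real D * (real j / real n)) ^ ((s - 2 * D) * j)"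
    using \<open>0 \<le> a\<close> a_le by (intro mult_left_mono power_mono) auto
  also have "\<dots> = (exp (real (2*D)) * (2 * real D * (real j / real n)) ^ (s - 2*D)) ^ j"
  proof -
    have "exp (real (2 * D * j)) = exp (real (2*D)) ^ j"
      by (simp add: mult.commute flip: exp_of_nat_mult)
    then show ?thesis by (simp only: power_mult_distrib power_mult)
  qed
  finally show ?thesis unfolding a_def .
qed

lemma star_system_factor_le:
  "real ((n * (n choose s)) choose j) \<le> (exp 1 * real n / real j * (exp 1 * real n / real s) ^ s) ^ j"
proof -
  have "real (n * (n choose s)) \<le> real n * (exp 1 * real n / real s) ^ s"
    using binomial_le_exp_pow[of n s] by (simp add: mult_left_mono)
  then have "exp 1 * real (n * (n choose s)) / real j
      \<le> exp 1 * (real n * (exp 1 * real n / real s) ^ s) / real j"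
    by (intro divide_right_mono mult_left_mono) auto
  also have "\<dots> = exp 1 * real n / real j * (exp 1 * real n / real s) ^ s" by simp
  finally have "(exp 1 * real (n * (n choose s)) / real j) ^ j
      \<le> (exp 1 * real n / real j * (exp 1 * real n / real s) ^ s) ^ j"
    by (rule power_mono) simp
  then show ?thesis using binomial_le_exp_pow[of "n * (n choose s)" j] by linarith
qed

lemma star_term_le:
  fixes n c s j D m :: nat and p :: real
  defines "x \<equiv> real j / real n"
  assumes j: "1 \<le> j" and n: "1 \<le> n" "n \<le> c" and m: "m \<le> c" "m \<le> 2 * D * j"
    and s: "2 * D + 1 \<le> s" and p: "0 \<le> p"
  shows "real (c choose m) * real ((n * (n choose s)) choose j) * (p * real m / real c) ^ (s * j)
     \<le> (exp (real (2*D+1)) * (2 * real D) ^ (s - 2*D) * x ^ (s - 2*D - 1)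
          * (exp 1 * (real n * p) / real s) ^ s) ^ j"
proof -
  have "0 < x" using j n by (simp add: x_def)
  have "(p * real m / real c) ^ (s * j) = (p ^ s) ^ j * (real m / real c) ^ (s * j)"
    by (simp only: times_divide_eq_right[symmetric] power_mult_distrib power_mult)
  then have "real (c choose m) * real ((n * (n choose s)) choose j) * (p * real m / real c) ^ (s * j)
      = (real (c choose m) * (real m / real c) ^ (s * j)) * real ((n * (n choose s)) choose j) * (p ^ s) ^ j"
    by (simp only: mult_ac)
  also have "\<dots> \<le> (exp (real (2*D)) * (2 * real D * x) ^ (s - 2*D)) ^ j
      * (exp 1 * real n / real j * (exp 1 * real n / real s) ^ s) ^ j * (p ^ s) ^ j"
    unfolding x_def using colour_factor_le[OF n m] star_system_factor_le[of n s j] s p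
    by (intro mult_mono) auto
  also have "\<dots> = (exp (real (2*D)) * (2 * real D * x) ^ (s - 2*D)
      * (exp 1 * real n / real j * (exp 1 * real n / real s) ^ s) * p ^ s) ^ j"
    by (simp only: power_mult_distrib)
  also have "exp (real (2*D)) * (2 * real D * x) ^ (s - 2*D) * (exp 1 * real n / real j * (exp 1 * real n / real s) ^ s) * p ^ s
      = exp (real (2*D+1)) * (2 * real D) ^ (s - 2*D) * x ^ (s - 2*D - 1) * (exp 1 * (real n * p) / real s) ^ s"
  proof -
    have "s - 2*D = Suc (s - 2*D - 1)" using s by simp
    then have "x ^ (s - 2*D) = x * x ^ (s - 2*D - 1)" by (metis power_Suc)
    moreover have "exp 1 * real n / real j = exp 1 / x" by (simp add: x_def)
    ultimately show ?thesis
      using \<open>0 < x\<close> by (simp only:) (simp add: power_mult_distrib exp_add field_simps)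
  qed
  finally show ?thesis .
qed

lemma per_leaf_factor_pow_le:
  fixes L :: real and s D :: nat
  assumes "1 \<le> L" "2 \<le> L powr 0.2" "L powr 0.2 - 1 \<le> real s" "8 * exp 1 * real D \<le> L powr 0.05"
  shows "(4 * exp 1 * real D * L powr 0.1 / real s) ^ s \<le> (L powr (-0.05)) powr (L powr 0.2 - 1)"
proof -
  have s: "L powr 0.2 / 2 \<le> real s" using assms by simp
  have "4 * exp 1 * real D * L powr 0.1 / real s \<le> 4 * exp 1 * real D * L powr 0.1 / (L powr 0.2 / 2)"
    using assms s by (intro divide_left_mono) auto
  also have "\<dots> = 8 * exp 1 * real D * L powr (-0.1)"
  proof -
    have "L powr 0.1 = L powr 0.2 * L powr (-0.1)" by (simp flip: powr_add)
    then show ?thesis using assms by (simp add: field_simps)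
  qed
  also have "\<dots> \<le> L powr 0.05 * L powr (-0.1)"
    using assms by (intro mult_right_mono) auto
  also have "\<dots> = L powr (-0.05)" by (simp flip: powr_add)
  finally have "(4 * exp 1 * real D * L powr 0.1 / real s) ^ s \<le> (L powr (-0.05)) ^ s"
    by (rule power_mono) simp
  also have "\<dots> = (L powr (-0.05)) powr real s"
    using assms by (simp add: powr_realpow)
  also have "\<dots> \<le> (L powr (-0.05)) powr (L powr 0.2 - 1)"
  proof -
    have "1 \<le> L powr 0.05" using assms by (intro ge_one_powr_ge_zero) auto
    then have "L powr (-0.05) \<le> 1" by (simp add: powr_minus_divide divide_le_eq_1)
    then show ?thesis using assms by (intro powr_mono') auto
  qed
  finally show ?thesis .
qed

text \<open>The ratio \<open>r\<close> of the geometric series bounding the failure probability, as a function of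
  \<open>D\<close> and \<open>L = ln n\<close>; it decays like \<open>exp (-\<Theta>(L^0.2 ln L))\<close>.\<close>

definition star_bound :: "nat \<Rightarrow> real \<Rightarrow> real" where
  "star_bound D L = exp (real (2*D+1)) / (2 * real D) ^ (2*D) * L powr (0.9 * real (2*D+1))
     * (L powr (-0.05)) powr (L powr 0.2 - 1)"

lemma star_bound_nonneg: "0 \<le> star_bound D L"
  by (simp add: star_bound_def)

lemma star_ratio_le_star_bound:
  fixes L x y :: real and s D :: nat
  assumes "0 < D" "1 \<le> L" "0 < x" "x \<le> 1 / L powr 0.9" "0 \<le> y" "y \<le> 2 * L" "2 * D + 1 \<le> s"
    and "2 \<le> L powr 0.2" "L powr 0.2 - 1 \<le> real s" "8 * exp 1 * real D \<le> L powr 0.05"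
  shows "exp (real (2*D+1)) * (2 * real D) ^ (s - 2*D) * x ^ (s - 2*D - 1) * (exp 1 * y / real s) ^ s
     \<le> star_bound D L"
proof -
  define x0 where "x0 = 1 / L powr 0.9"
  have "0 < x0" using assms by (simp add: x0_def)
  have "exp (real (2*D+1)) * (2 * real D) ^ (s - 2*D) * x ^ (s - 2*D - 1) * (exp 1 * y / real s) ^ s
      \<le> exp (real (2*D+1)) * (2 * real D) ^ (s - 2*D) * x0 ^ (s - 2*D - 1) * (exp 1 * (2 * L) / real s) ^ s"
    using assms by (intro mult_mono power_mono divide_right_mono) (auto simp: x0_def)
  also have "\<dots> = exp (real (2*D+1)) / (2 * real D) ^ (2*D) * L powr (0.9 * real (2*D+1))
      * (4 * exp 1 * real D * (L * x0) / real s) ^ s"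
  proof -
    have four_pow: "(4::real) ^ s = 2 ^ s * 2 ^ s" by (simp flip: power_mult_distrib)
    have "(2 * real D) ^ (s - 2*D) = (2 * real D) ^ s / (2 * real D) ^ (2*D)"
      using assms by (simp add: power_diff)
    moreover have "x0 ^ (s - 2*D - 1) = x0 ^ s * L powr (0.9 * real (2*D+1))"
    proof -
      have "x0 ^ (s - 2*D - 1) = x0 ^ s * (L powr 0.9) ^ (2*D+1)"
        using assms \<open>0 < x0\<close> power_diff[of x0 "2*D+1" s]
        by (simp add: x0_def power_one_over diff_diff_add)
      also have "(L powr 0.9) ^ (2*D+1) = (L powr 0.9) powr real (2*D+1)"
        by (rule powr_realpow[symmetric]) (use assms in simp)
      also have "\<dots> = L powr (0.9 * real (2*D+1))"
        by (simp add: powr_powr)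
      finally show ?thesis .
    qed
    ultimately show ?thesis
      using four_pow by (simp add: power_mult_distrib power_divide field_simps)
  qed
  also have "L * x0 = L powr 0.1"
  proof -
    have "L powr 0.1 * L powr 0.9 = L" using assms by (simp flip: powr_add)
    then show ?thesis using assms by (simp add: x0_def field_simps)
  qed
  also have "exp (real (2*D+1)) / (2 * real D) ^ (2*D) * L powr (0.9 * real (2*D+1))
      * (4 * exp 1 * real D * L powr 0.1 / real s) ^ s \<le> star_bound D L"
    unfolding star_bound_def using assms per_leaf_factor_pow_le[of L s D]
    by (intro mult_left_mono) auto
  finally show ?thesis .
qed

lemma sum_power_le_twice:
  fixes r :: real
  assumes "0 \<le> r" "r \<le> 1/2"
  shows "(\<Sum>j = 1..n. r ^ j) \<le> 2 * r"
proof -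
  have "(\<Sum>j = 1..n. r ^ j) \<le> r / (1 - r)"
    using assms by (auto simp: sum_gp intro!: divide_right_mono)
  also have "\<dots> \<le> 2 * r"
    using assms mult_left_mono[of "1/2" "1 - r" "2 * r"] by (simp add: pos_divide_le_eq)
  finally show ?thesis .
qed

subsection \<open>The failure probability\<close>

lemma union_bound_term_le_star_bound:
  fixes n c s j D :: nat and p L :: real
  assumes "0 < D" "1 \<le> j" "1 \<le> n" "n \<le> c" "2 * D * j \<le> c" "real j / real n \<le> 1 / L powr 0.9"
    and "0 \<le> p" "real n * p \<le> 2 * L" "2 * D + 1 \<le> s" "L powr 0.2 - 1 \<le> real s"
    and "1 \<le> L" "2 \<le> L powr 0.2" "8 * exp 1 * real D \<le> L powr 0.05"
  shows "real (c choose (2*D*j - 1)) * real ((n * (n choose s)) choose j) * (p * real (2*D*j - 1) / c) ^ (s*j)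
    \<le> star_bound D L ^ j"
proof -
  have "real (c choose (2*D*j - 1)) * real ((n * (n choose s)) choose j) * (p * real (2*D*j - 1) / c) ^ (s*j)
    \<le> (exp (real (2*D+1)) * (2 * real D) ^ (s - 2*D) * (real j / real n) ^ (s - 2*D - 1)
        * (exp 1 * (real n * p) / real s) ^ s) ^ j"
    using assms by (intro star_term_le) auto
  also have "\<dots> \<le> star_bound D L ^ j"
  proof (intro power_mono star_ratio_le_star_bound)
    show "0 < real j / real n" using assms by simp
    show "0 \<le> exp (real (2*D+1)) * (2 * real D) ^ (s - 2*D) * (real j / real n) ^ (s - 2*D - 1)
        * (exp 1 * (real n * p) / real s) ^ s" using assms by simp
  qed (use assms in auto)
  finally show ?thesis .
qed

lemma prob_not_star_prop_le_star_bound: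
  fixes n D :: nat and \<epsilon> p :: real
  defines "L \<equiv> ln (real n)"
  assumes \<epsilon>: "0 < \<epsilon>" and D: "0 < D" and p: "0 \<le> p" "p \<le> 1" "real n * p \<le> 2 * L"
    and L: "1 \<le> L" "2 * real D + 2 \<le> L powr 0.2" "2 * real D \<le> L powr 0.9"
      "8 * exp 1 * real D \<le> L powr 0.05"
    and small: "star_bound D L \<le> 1/2"
  shows "measure_pmf.prob (Gc n p (nat \<lfloor>(1 + \<epsilon>) * real n\<rfloor>)) {\<omega>. \<not> star_prop n D \<omega>}
    \<le> 2 * star_bound D L"
proof -
  define c where "c = nat \<lfloor>(1 + \<epsilon>) * real n\<rfloor>"
  define s where "s = nat \<lfloor>L powr 0.2\<rfloor>"
  define B where "B = real n / L powr 0.9"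
  define J where "J = {j. 1 \<le> j \<and> j \<le> n \<and> real j \<le> B}"
  have "1 \<le> n" using L(1) by (cases n) (auto simp: L_def)
  have "n \<le> c" unfolding c_def by (rule le_nat_floor) (use \<epsilon> in \<open>simp add: algebra_simps\<close>)
  have "real s = of_int \<lfloor>L powr 0.2\<rfloor>" unfolding s_def by simp
  then have s: "L powr 0.2 - 1 \<le> real s" "2 * D + 1 \<le> s"
    using floor_correct[of "L powr 0.2"] L(2) by linarith+
  have few_colours: "2 * D * j \<le> c" if "real j \<le> B" for j
  proof -
    have "2 * real D * real j \<le> real n * (2 * real D / L powr 0.9)"
      using mult_left_mono[OF that, of "2 * real D"] by (simp add: B_def mult.commute)
    also have "\<dots> \<le> real n" using L(1,3) by (intro mult_left_le) auto
    finally have "real (2 * D * j) \<le> real c" using \<open>n \<le> c\<close> by simp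
    then show ?thesis by (simp only: of_nat_le_iff)
  qed
  have "measure_pmf.prob (Gc n p c) {\<omega>. \<not> star_prop n D \<omega>}
    \<le> (\<Sum>j\<in>J. real (c choose (2*D*j - 1)) * real ((n * (n choose s)) choose j) * (p * real (2*D*j - 1) / c) ^ (s*j))"
    unfolding J_def s_def B_def L_def by (rule prob_not_star_prop_le_sum) (use p \<open>1 \<le> n\<close> \<open>n \<le> c\<close>
      few_colours in \<open>auto simp: B_def L_def\<close>)
  also have "\<dots> \<le> (\<Sum>j\<in>J. star_bound D L ^ j)"
  proof (rule sum_mono)
    fix j assume "j \<in> J"
    then have "1 \<le> j" "real j \<le> B" "real j / real n \<le> 1 / L powr 0.9"
      using \<open>1 \<le> n\<close> by (auto simp: J_def B_def field_simps)
    then show "real (c choose (2*D*j - 1)) * real ((n * (n choose s)) choose j)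
        * (p * real (2*D*j - 1) / c) ^ (s*j) \<le> star_bound D L ^ j"
      using D \<open>1 \<le> n\<close> \<open>n \<le> c\<close> few_colours p s L
      by (intro union_bound_term_le_star_bound) auto
  qed
  also have "\<dots> \<le> (\<Sum>j = 1..n. star_bound D L ^ j)"
    by (rule sum_mono2) (auto simp: J_def star_bound_nonneg)
  also have "\<dots> \<le> 2 * star_bound D L"
    using small by (intro sum_power_le_twice star_bound_nonneg)
  finally show ?thesis unfolding c_def .
qed

lemma star_bound_ln_tendsto_zero: "(\<lambda>n. star_bound D (ln (real n))) \<longlonglongrightarrow> 0"
  unfolding star_bound_def by real_asymp

lemma eventually_prob_not_star_prop_le:
  fixes \<epsilon> :: real and D :: nat and p :: "nat \<Rightarrow> real"
  assumes "0 < \<epsilon>" "0 < D"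
    and p: "\<forall>\<^sub>F n in sequentially. 0 \<le> p n \<and> p n \<le> 2 * ln (real n) / real n"
  shows "\<forall>\<^sub>F n in sequentially.
    measure_pmf.prob (Gc n (p n) (nat \<lfloor>(1 + \<epsilon>) * real n\<rfloor>)) {\<omega>. \<not> star_prop n D \<omega>}
      \<le> 2 * star_bound D (ln (real n))"
proof -
  have "\<forall>\<^sub>F n in sequentially. 1 \<le> ln (real n)"
    and "\<forall>\<^sub>F n in sequentially. 2 * real D + 2 \<le> ln (real n) powr 0.2"
    and "\<forall>\<^sub>F n in sequentially. 2 * real D \<le> ln (real n) powr 0.9"
    and "\<forall>\<^sub>F n in sequentially. 8 * exp 1 * real D \<le> ln (real n) powr 0.05"
    and "\<forall>\<^sub>F n in sequentially. 2 * ln (real n) \<le> real n"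
    by real_asymp+
  moreover have "\<forall>\<^sub>F n in sequentially. star_bound D (ln (real n)) < 1/2"
    by (rule order_tendstoD(2)[OF star_bound_ln_tendsto_zero]) simp
  ultimately show ?thesis
    using p
  proof eventually_elim
    case (elim n)
    then have "1 \<le> n" by (cases n) auto
    then have np: "real n * p n \<le> 2 * ln (real n)" using elim by (simp add: field_simps)
    then have "real n * p n \<le> real n * 1" using elim by linarith
    then have "p n \<le> 1" by (rule mult_left_le_imp_le) (use \<open>1 \<le> n\<close> in simp)
    show ?case
      using prob_not_star_prop_le_star_bound[OF assms(1,2) _ \<open>p n \<le> 1\<close> np elim(1-4)]
        less_imp_le[OF elim(6)] elim(7) by blast
  qed
qed

lemma prob_Collect_not_eq: "measure_pmf.prob M {x. \<not> P x} = 1 - measure_pmf.prob M {x. P x}"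
proof -
  have "measure_pmf.prob M (space (measure_pmf M) - {x. P x}) = 1 - measure_pmf.prob M {x. P x}"
    by (rule measure_pmf.prob_compl) simp
  moreover have "space (measure_pmf M) - {x. P x} = {x. \<not> P x}" by auto
  ultimately show ?thesis by simp
qed

theorem lemma6:
  fixes \<epsilon> :: real and D :: nat and p :: "nat \<Rightarrow> real"
  assumes "\<epsilon> > 0" and "D > 0"
    and "\<forall>\<^sub>F n in sequentially. ln (real n) / real n \<le> p n \<and> p n \<le> 2 * ln (real n) / real n"
  shows "(\<lambda>n. measure_pmf.prob (Gc n (p n) (nat \<lfloor>(1 + \<epsilon>) * real n\<rfloor>)) {\<omega>. star_prop n D \<omega>})
           \<longlonglongrightarrow> 1"
proof -
  have "0 \<le> ln (real n) / real n" for n :: nat by (cases n) auto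
  then have "\<forall>\<^sub>F n in sequentially. 0 \<le> p n \<and> p n \<le> 2 * ln (real n) / real n"
    using assms(3) by (auto elim: eventually_mono intro: order_trans)
  from eventually_prob_not_star_prop_le[OF assms(1,2) this]
  have lower: "\<forall>\<^sub>F n in sequentially. 1 - 2 * star_bound D (ln (real n))
      \<le> measure_pmf.prob (Gc n (p n) (nat \<lfloor>(1 + \<epsilon>) * real n\<rfloor>)) {\<omega>. star_prop n D \<omega>}"
    by eventually_elim (simp add: prob_Collect_not_eq)
  have "(\<lambda>n. 1 - 2 * star_bound D (ln (real n))) \<longlonglongrightarrow> 1"
    using tendsto_diff[OF tendsto_const tendsto_mult[OF tendsto_const star_bound_ln_tendsto_zero]]
    by simp
  then show ?thesis
    by (intro tendsto_sandwich[OF lower _ _ tendsto_const]) auto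
qed

end
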